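(* Let $\mathbf{x}=(x_1,\dots,x_n)$, and let $u(\mathbf{x},g(\mathbf{x}))$ be a multivariate constrained expression built by recursively substituting univariate constrained expressions ${}^{k}u(\mathbf{x},g)=g+\sum_j {}^{k}\phi_j(x_k)\,{}^{k}\rho_j(\mathbf{x},g)$, $k=1,\dots,n$, into one another (each used once, the innermost using the free function $g$). Then for any function $f:\mathbb{R}^n\to\mathbb{R}$ satisfying all the constraints there exists at least one free function $g$ such that $u(\mathbf{x},g(\mathbf{x}))=f(\mathbf{x})$. In other words, multivariate constrained expressions are surjective functionals from the set of all free functions to the set of all functions satisfying the constraints.
   Context: For each $k$ there are linear constraints ${}^{k}\mathcal{C}_j[u]={}^{k}\kappa_j$, $j=1,\dots,\ell_k$, where ${}^{k}\mathcal{C}_j$ is a linear operator associated with the $k$-th independent variable returning the operand function evaluated in the way the dependent variable appears in that constraint, and ${}^{k}\kappa_j$ does not depend on $x_k$. The projection functionals are ${}^{k}\rho_j(\mathbf{x},g)={}^{k}\kappa_j-{}^{k}\mathcal{C}_j[g]$ and the switching functions ${}^{k}\phi_j(x_k)$ are linear combinations of support functions in $x_k$ satisfying ${}^{k}\mathcal{C}_i[{}^{k}\phi_j]=\delta_{ij}$. A free function is any $g:\mathbb{R}^n\to\mathbb{R}$ for which all constraint operators (and compositions with at most one operator per variable) appearing in the construction are defined. A function $f$ satisfies the constraints if ${}^{k}\mathcal{C}_j[f]={}^{k}\kappa_j$ for all $k,j$. *)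

theory Defs
  imports "HOL-Analysis.Analysis"
begin

type_synonym ('n) rfun = "real^'n \<Rightarrow> real"

definition lin_op :: "('n::finite rfun \<Rightarrow> 'n rfun) \<Rightarrow> bool" where
  "lin_op C \<longleftrightarrow> (\<forall>a b g h. C (\<lambda>x. a * g x + b * h x) = (\<lambda>x. a * C g x + b * C h x))"

definition indep_of :: "'n::finite \<Rightarrow> 'n rfun \<Rightarrow> bool" where
  "indep_of k F \<longleftrightarrow> (\<forall>x t. F (\<chi> i. if i = k then t else x $ i) = F x)"

definition proj_fun ::
  "('n::finite \<Rightarrow> nat \<Rightarrow> 'n rfun \<Rightarrow> 'n rfun) \<Rightarrow> ('n \<Rightarrow> nat \<Rightarrow> 'n rfun)
     \<Rightarrow> 'n \<Rightarrow> nat \<Rightarrow> real^'n \<Rightarrow> 'n rfun \<Rightarrow> real" where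
  "proj_fun C \<kappa> k j x g = \<kappa> k j x - C k j g x"

definition uni_ce ::
  "('n::finite \<Rightarrow> nat \<Rightarrow> 'n rfun \<Rightarrow> 'n rfun) \<Rightarrow> ('n \<Rightarrow> nat \<Rightarrow> 'n rfun) \<Rightarrow> ('n \<Rightarrow> nat)
     \<Rightarrow> ('n \<Rightarrow> nat \<Rightarrow> real \<Rightarrow> real) \<Rightarrow> 'n \<Rightarrow> 'n rfun \<Rightarrow> 'n rfun" where
  "uni_ce C \<kappa> ell \<phi> k g =
     (\<lambda>x. g x + (\<Sum>j\<in>{1..ell k}. \<phi> k j (x $ k) * proj_fun C \<kappa> k j x g))"

text \<open>Multivariate constrained expression obtained by recursively substituting the
  univariate ones into each other along the order ks = [k_1,...,k_n]:
  ^{k_1}u(x, ^{k_2}u(x, ... ^{k_n}u(x,g)...)); the innermost uses g.\<close>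
definition multi_ce ::
  "('n::finite \<Rightarrow> nat \<Rightarrow> 'n rfun \<Rightarrow> 'n rfun) \<Rightarrow> ('n \<Rightarrow> nat \<Rightarrow> 'n rfun) \<Rightarrow> ('n \<Rightarrow> nat)
     \<Rightarrow> ('n \<Rightarrow> nat \<Rightarrow> real \<Rightarrow> real) \<Rightarrow> 'n list \<Rightarrow> 'n rfun \<Rightarrow> 'n rfun" where
  "multi_ce C \<kappa> ell \<phi> ks g = foldr (uni_ce C \<kappa> ell \<phi>) ks g"

definition satisfies_constraints ::
  "('n::finite \<Rightarrow> nat \<Rightarrow> 'n rfun \<Rightarrow> 'n rfun) \<Rightarrow> ('n \<Rightarrow> nat \<Rightarrow> 'n rfun) \<Rightarrow> ('n \<Rightarrow> nat)
     \<Rightarrow> 'n rfun \<Rightarrow> bool" where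
  "satisfies_constraints C \<kappa> ell f \<longleftrightarrow> (\<forall>k. \<forall>j\<in>{1..ell k}. C k j f = \<kappa> k j)"

end

theory Submission
  imports Defs
begin

text \<open>Take the free function g to be f itself: every projection functional then
  vanishes, so each univariate constrained expression, and hence their composition,
  returns f unchanged. Linearity, the switching property and the order of
  substitution are only needed for the converse (that every constrained expression
  satisfies the constraints), not for surjectivity.\<close>

lemma proj_fun_eq_0_if_satisfies_constraints:
  assumes "satisfies_constraints C \<kappa> ell f" and "j \<in> {1..ell k}"
  shows "proj_fun C \<kappa> k j x f = 0"
  using assms by (simp add: proj_fun_def satisfies_constraints_def)

lemma uni_ce_fixed_point:
  assumes "satisfies_constraints C \<kappa> ell f"
  shows "uni_ce C \<kappa> ell \<phi> k f = f"
  using proj_fun_eq_0_if_satisfies_constraints[OF assms] by (simp add: uni_ce_def)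

lemma multi_ce_fixed_point:
  assumes "satisfies_constraints C \<kappa> ell f"
  shows "multi_ce C \<kappa> ell \<phi> ks f = f"
  unfolding multi_ce_def
  by (induction ks) (simp_all add: uni_ce_fixed_point[OF assms])

theorem theorem7:
  fixes C :: "'n::finite \<Rightarrow> nat \<Rightarrow> 'n rfun \<Rightarrow> 'n rfun"
    and \<kappa> :: "'n \<Rightarrow> nat \<Rightarrow> 'n rfun"
    and ell :: "'n \<Rightarrow> nat"
    and \<phi> :: "'n \<Rightarrow> nat \<Rightarrow> real \<Rightarrow> real"
    and ks :: "'n list"
  assumes lin: "\<And>k j. j \<in> {1..ell k} \<Longrightarrow> lin_op (C k j)"
    and kappa_indep: "\<And>k j. j \<in> {1..ell k} \<Longrightarrow> indep_of k (\<kappa> k j)"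
    and switching: "\<And>k i j. i \<in> {1..ell k} \<Longrightarrow> j \<in> {1..ell k} \<Longrightarrow>
                      C k i (\<lambda>x. \<phi> k j (x $ k)) = (\<lambda>x. if i = j then 1 else 0)"
    and order: "distinct ks" "set ks = UNIV"
  shows "\<forall>f. satisfies_constraints C \<kappa> ell f \<longrightarrow> (\<exists>g. multi_ce C \<kappa> ell \<phi> ks g = f)"
proof (intro allI impI)
  fix f
  assume "satisfies_constraints C \<kappa> ell f"
  then have "multi_ce C \<kappa> ell \<phi> ks f = f" by (rule multi_ce_fixed_point)
  then show "\<exists>g. multi_ce C \<kappa> ell \<phi> ks g = f" by blast
qed

end
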